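(* $\mathfrak{L}(\mathrm{rtDVA}(1))\subsetneq\mathfrak{L}(\mathrm{1DFAM})$.
   Context: $\mathfrak{L}(A)$ denotes the class of languages recognized by machines of type $A$. A real-time deterministic vector automaton of dimension $1$ ($\mathrm{rtDVA}(1)$) is a 6-tuple $(Q,\Sigma,\delta,q_0,Q_a,v)$ with finite state set $Q$, initial state $q_0$, accept states $Q_a$, initial value $v\in\mathbb{Q}$ (freely chosen), and $\delta:Q\times(\Sigma\cup\{\cent,\$\})\times\{=,\neq\}\to Q\times\mathbb{Q}$. The input $w$ is read as $\cent w\$$ left to right, one symbol per step; in state $q$ reading $\sigma$, with $\omega$ equal to "$=$" iff the current value equals $1$, if $\delta(q,\sigma,\omega)=(q',m)$ the machine goes to $q'$ and multiplies its value by $m$. Acceptance: after processing $\$$, the state is in $Q_a$ and the value equals $1$. A one-way deterministic finite automaton with multiplication (1DFAM) is a 6-tuple $(Q,\Sigma,\delta,q_0,Q_a,\Gamma)$ with $\Gamma$ a finite set of rationals and a rational register initially $1$; $\delta:Q\times(\Sigma\cup\{\cent,\$\})\times\{=,\neq\}\to Q\times\{\downarrow,\rightarrow\}\times\Gamma$; reading $\sigma$ in state $q$ with $\omega$ "$=$" iff the register equals $1$, if $\delta(q,\sigma,\omega)=(q',d,\gamma)$ it goes to $q'$, keeps the head in place ($\downarrow$) or moves it one cell right ($\rightarrow$), and multiplies the register by $\gamma$. The tape holds $\cent w\$$ and the input is accepted iff the machine enters an accept state with register value $1$ after scanning $\$$. *)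

theory Defs
  imports Complex_Main
begin

datatype 'a tsym = Cent | Dollar | Sym 'a

definition tape :: "'a list \<Rightarrow> 'a tsym list" where
  "tape w = Cent # map Sym w @ [Dollar]"

definition tape_alph :: "'a set \<Rightarrow> 'a tsym set" where
  "tape_alph \<Sigma> = Sym ` \<Sigma> \<union> {Cent, Dollar}"

text \<open>The boolean argument
  of the transition function is True iff the current value equals 1
  (the "=" case).\<close>
datatype 'a rtdva1 = RtDVA1
  (dva_Q: "nat set")
  (dva_delta: "nat \<Rightarrow> 'a tsym \<Rightarrow> bool \<Rightarrow> nat \<times> rat")
  (dva_q0: nat)
  (dva_Qa: "nat set")
  (dva_v: rat)

definition rtdva1_wf :: "'a set \<Rightarrow> 'a rtdva1 \<Rightarrow> bool" where
  "rtdva1_wf \<Sigma> M \<longleftrightarrow> finite (dva_Q M) \<and> dva_q0 M \<in> dva_Q M \<and> dva_Qa M \<subseteq> dva_Q M \<and>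
     (\<forall>q\<in>dva_Q M. \<forall>\<sigma>\<in>tape_alph \<Sigma>. \<forall>b. fst (dva_delta M q \<sigma> b) \<in> dva_Q M)"

definition rtdva1_step :: "'a rtdva1 \<Rightarrow> nat \<times> rat \<Rightarrow> 'a tsym \<Rightarrow> nat \<times> rat" where
  "rtdva1_step M c \<sigma> =
     (case dva_delta M (fst c) \<sigma> (snd c = 1) of (q', m) \<Rightarrow> (q', snd c * m))"

definition rtdva1_final :: "'a rtdva1 \<Rightarrow> 'a list \<Rightarrow> nat \<times> rat" where
  "rtdva1_final M w = foldl (rtdva1_step M) (dva_q0 M, dva_v M) (tape w)"

definition rtdva1_accepts :: "'a rtdva1 \<Rightarrow> 'a list \<Rightarrow> bool" where
  "rtdva1_accepts M w \<longleftrightarrow>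
     fst (rtdva1_final M w) \<in> dva_Qa M \<and> snd (rtdva1_final M w) = 1"

definition rtDVA1_langs :: "'a set \<Rightarrow> 'a list set set" where
  "rtDVA1_langs \<Sigma> = {L. \<exists>M. rtdva1_wf \<Sigma> M \<and>
      L = {w. set w \<subseteq> \<Sigma> \<and> rtdva1_accepts M w}}"

datatype move = Stay | Right

datatype 'a dfam = DFAM
  (fam_Q: "nat set")
  (fam_delta: "nat \<Rightarrow> 'a tsym \<Rightarrow> bool \<Rightarrow> nat \<times> move \<times> rat")
  (fam_q0: nat)
  (fam_Qa: "nat set")
  (fam_Gamma: "rat set")

definition dfam_wf :: "'a set \<Rightarrow> 'a dfam \<Rightarrow> bool" where
  "dfam_wf \<Sigma> M \<longleftrightarrow> finite (fam_Q M) \<and> finite (fam_Gamma M) \<and>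
     fam_q0 M \<in> fam_Q M \<and> fam_Qa M \<subseteq> fam_Q M \<and>
     (\<forall>q\<in>fam_Q M. \<forall>\<sigma>\<in>tape_alph \<Sigma>. \<forall>b.
        fst (fam_delta M q \<sigma> b) \<in> fam_Q M \<and> snd (snd (fam_delta M q \<sigma> b)) \<in> fam_Gamma M)"

text \<open>Configurations: (state, head position on the tape, register).
  Once the head has moved past the right end-marker the machine has stopped.\<close>
definition dfam_step :: "'a dfam \<Rightarrow> 'a tsym list \<Rightarrow> nat \<times> nat \<times> rat \<Rightarrow> nat \<times> nat \<times> rat" where
  "dfam_step M t c =
     (case c of (q, i, x) \<Rightarrow>
       if i < length t then
         (case fam_delta M q (t ! i) (x = 1) of (q', d, \<gamma>) \<Rightarrow>
            (q', (if d = Right then Suc i else i), x * \<gamma>))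
       else c)"

definition dfam_conf :: "'a dfam \<Rightarrow> 'a list \<Rightarrow> nat \<Rightarrow> nat \<times> nat \<times> rat" where
  "dfam_conf M w k = (dfam_step M (tape w) ^^ k) (fam_q0 M, 0, 1)"

definition dfam_accepts :: "'a dfam \<Rightarrow> 'a list \<Rightarrow> bool" where
  "dfam_accepts M w \<longleftrightarrow> (\<exists>k. case dfam_conf M w k of (q, i, x) \<Rightarrow>
       i = length (tape w) \<and> q \<in> fam_Qa M \<and> x = 1)"

definition DFAM_langs :: "'a set \<Rightarrow> 'a list set set" where
  "DFAM_langs \<Sigma> = {L. \<exists>M. dfam_wf \<Sigma> M \<and>
      L = {w. set w \<subseteq> \<Sigma> \<and> dfam_accepts M w}}"

end

theory Submission
  imports Defs
begin

text \<open>
  A real-time DVA(1) is simulated by a 1DFAM that spends one stationary step on the left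
  end-marker loading the initial value into its register and then copies the DVA move for move.

  For strictness take \<open>L = {0\<^sup>n 1\<^sup>m | m \<le> n}\<close>. A 1DFAM keeps \<open>2\<^sup>n\<^sup>-\<^sup>m\<close> in its register
  and on the right end-marker halves it in place until it reads 1, which happens iff \<open>m \<le> n\<close>.

  A real-time DVA(1) for \<open>L\<close> would, after \<open>0\<^sup>n\<close> for infinitely many \<open>n\<close>, be in one state \<open>p\<close>
  with pairwise distinct values \<open>x\<^sub>n\<close>. While the value is not 1 it reads ones blindly: its
  states are periodic with some period \<open>r\<close> from some time \<open>T\<close> on, and its value after \<open>1\<^sup>t\<close>
  is \<open>x\<^sub>n y\<^sub>t\<close> for factors \<open>y\<^sub>t\<close> independent of \<open>n\<close>. Accepting both \<open>1\<^sup>T\<close> and \<open>1\<^sup>T\<^sup>+\<^sup>r\<close>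
  blindly for one large \<open>n\<close> forces \<open>y\<^sub>T\<^sub>+\<^sub>r = y\<^sub>T\<close>, so \<open>y\<close> is eventually periodic and takes
  finitely many values. Accepting \<open>1\<^sup>n\<^sup>+\<^sup>1\<^sup>-\<^sup>r\<close> but rejecting \<open>1\<^sup>n\<^sup>+\<^sup>1\<close> is then impossible
  blindly, so for every large \<open>n\<close> the value hits 1, i.e. \<open>x\<^sub>n\<close> is one of the finitely many
  \<open>1 / y\<^sub>h\<close>: a contradiction.
\<close>

lemma recurrence_periodic:
  assumes rec: "\<And>t. f (Suc t) = g (f t)" and period: "f (T + r) = f T" and "T \<le> t"
  shows "f (t + r) = f t"
  using \<open>T \<le> t\<close>
proof (induction t rule: dec_induct)
  case (step t)
  then show ?case using rec[of "t + r"] rec[of t] by simp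
qed (rule period)

lemma eventually_periodic_finite_range:
  fixes f :: "nat \<Rightarrow> 'a"
  assumes "0 < r" and periodic: "\<And>t. T \<le> t \<Longrightarrow> f (t + r) = f t"
  shows "finite (range f)"
proof -
  have "f t \<in> f ` {..<T + r}" for t
  proof (induction t rule: less_induct)
    case (less t)
    show ?case
    proof (cases "t < T + r")
      case False
      then have "f t = f (t - r)" using periodic[of "t - r"] by simp
      then show ?thesis using less.IH[of "t - r"] False \<open>0 < r\<close> by simp
    qed simp
  qed
  then show ?thesis by (metis finite_lessThan finite_surj image_subsetI)
qed

lemma infinite_inj_on_avoids_finite:
  fixes I :: "nat set"
  assumes "infinite I" "inj_on x I" "finite F"
  obtains n where "n \<in> I" "K \<le> n" "x n \<notin> F"
proof -
  have "finite ({..<K} \<union> (x -` F \<inter> I))"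
    using finite_vimage_IntI[OF assms(3,2)] by simp
  then have "I - ({..<K} \<union> (x -` F \<inter> I)) \<noteq> {}"
    using assms(1) by (metis Diff_infinite_finite finite.emptyI)
  then obtain n where "n \<in> I - ({..<K} \<union> (x -` F \<inter> I))" by blast
  then show thesis using that[of n] by auto
qed

section \<open>Simulating a real-time DVA(1) by a 1DFAM\<close>

lemma finite_tape_alph: "finite \<Sigma> \<Longrightarrow> finite (tape_alph \<Sigma>)"
  by (simp add: tape_alph_def)

lemma length_tape: "length (tape w) = length w + 2"
  by (simp add: tape_def)

lemma tape_nth_Suc: "i < length w \<Longrightarrow> tape w ! Suc i = Sym (w ! i)"
  by (simp add: tape_def nth_append)

lemma funpow_dfam_step_halted:
  "length t \<le> fst (snd c) \<Longrightarrow> (dfam_step M t ^^ n) c = c"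
  by (induction n) (cases c; simp add: dfam_step_def)+

lemma dfam_conf_add: "dfam_conf M w (k + l) = (dfam_step M (tape w) ^^ l) (dfam_conf M w k)"
  unfolding dfam_conf_def by (subst add.commute) (simp add: funpow_add)

text \<open>Accepting configurations have halted and hence persist, so acceptance may be sought
  after any given number of steps.\<close>

lemma dfam_accepts_after:
  "dfam_accepts M w \<longleftrightarrow> (\<exists>l. case dfam_conf M w (k + l) of (q, i, x) \<Rightarrow>
     i = length (tape w) \<and> q \<in> fam_Qa M \<and> x = 1)"
proof
  assume "dfam_accepts M w"
  then obtain l where l: "case dfam_conf M w l of (q, i, x) \<Rightarrow>
      i = length (tape w) \<and> q \<in> fam_Qa M \<and> x = 1"
    unfolding dfam_accepts_def by (rule exE)
  then have "dfam_conf M w (l + k) = dfam_conf M w l"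
    unfolding dfam_conf_add by (intro funpow_dfam_step_halted) (auto split: prod.splits)
  with l show "\<exists>l. case dfam_conf M w (k + l) of (q, i, x) \<Rightarrow>
      i = length (tape w) \<and> q \<in> fam_Qa M \<and> x = 1"
    by (metis add.commute)
next
  assume "\<exists>l. case dfam_conf M w (k + l) of (q, i, x) \<Rightarrow>
     i = length (tape w) \<and> q \<in> fam_Qa M \<and> x = 1"
  then obtain l where "case dfam_conf M w (k + l) of (q, i, x) \<Rightarrow>
     i = length (tape w) \<and> q \<in> fam_Qa M \<and> x = 1" by (rule exE)
  then show "dfam_accepts M w" unfolding dfam_accepts_def by (rule exI)
qed

definition dfam_of_rtdva1 :: "'a set \<Rightarrow> 'a rtdva1 \<Rightarrow> 'a dfam" where
  "dfam_of_rtdva1 \<Sigma> M = DFAM (insert 0 (Suc ` dva_Q M))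
     (\<lambda>q \<sigma> b. case q of
         0 \<Rightarrow> (Suc (dva_q0 M), Stay, dva_v M)
       | Suc p \<Rightarrow> (Suc (fst (dva_delta M p \<sigma> b)), Right, snd (dva_delta M p \<sigma> b)))
     0 (Suc ` dva_Qa M)
     (insert (dva_v M) ((\<lambda>(q, \<sigma>, b). snd (dva_delta M q \<sigma> b)) ` (dva_Q M \<times> tape_alph \<Sigma> \<times> UNIV)))"

lemma dfam_of_rtdva1_wf:
  assumes "finite \<Sigma>" "rtdva1_wf \<Sigma> M"
  shows "dfam_wf \<Sigma> (dfam_of_rtdva1 \<Sigma> M)"
proof -
  have "finite (dva_Q M \<times> tape_alph \<Sigma> \<times> (UNIV :: bool set))"
    using assms by (simp add: rtdva1_wf_def finite_tape_alph)
  moreover have "snd (dva_delta M q \<sigma> b) \<in>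
      (\<lambda>(q, \<sigma>, b). snd (dva_delta M q \<sigma> b)) ` (dva_Q M \<times> tape_alph \<Sigma> \<times> UNIV)"
    if "q \<in> dva_Q M" "\<sigma> \<in> tape_alph \<Sigma>" for q \<sigma> b
    using that by (intro image_eqI[of _ _ "(q, \<sigma>, b)"]) auto
  ultimately show ?thesis
    using assms(2) by (auto simp: dfam_wf_def dfam_of_rtdva1_def rtdva1_wf_def split: nat.splits)
qed

lemma dfam_of_rtdva1_conf:
  assumes "j \<le> length (tape w)"
  shows "dfam_conf (dfam_of_rtdva1 \<Sigma> M) w (Suc j) =
    (let c = foldl (rtdva1_step M) (dva_q0 M, dva_v M) (take j (tape w))
     in (Suc (fst c), j, snd c))"
  using assms
proof (induction j)
  case 0
  then show ?case by (simp add: dfam_conf_def dfam_step_def dfam_of_rtdva1_def tape_def)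
next
  case (Suc j)
  then have j: "j < length (tape w)" by simp
  then have "take (Suc j) (tape w) = take j (tape w) @ [tape w ! j]"
    by (rule take_Suc_conv_app_nth)
  with j Suc.IH show ?case
    by (simp add: dfam_conf_def Let_def dfam_step_def dfam_of_rtdva1_def rtdva1_step_def
        split: prod.splits)
qed

lemma dfam_accepts_dfam_of_rtdva1:
  "dfam_accepts (dfam_of_rtdva1 \<Sigma> M) w \<longleftrightarrow> rtdva1_accepts M w"
proof -
  let ?M = "dfam_of_rtdva1 \<Sigma> M" and ?L = "length (tape w)"
  have final:
    "dfam_conf ?M w (Suc ?L) = (Suc (fst (rtdva1_final M w)), ?L, snd (rtdva1_final M w))"
    using dfam_of_rtdva1_conf[of ?L w \<Sigma> M] by (simp add: rtdva1_final_def Let_def)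
  have "dfam_conf ?M w (Suc ?L + l) = dfam_conf ?M w (Suc ?L)" for l
    unfolding dfam_conf_add final by (rule funpow_dfam_step_halted) simp
  then show ?thesis
    using dfam_accepts_after[of ?M w "Suc ?L"] final
    by (auto simp: rtdva1_accepts_def dfam_of_rtdva1_def)
qed

lemma rtDVA1_langs_subset_DFAM_langs: "finite \<Sigma> \<Longrightarrow> rtDVA1_langs \<Sigma> \<subseteq> DFAM_langs \<Sigma>"
  unfolding rtDVA1_langs_def DFAM_langs_def
  using dfam_of_rtdva1_wf dfam_accepts_dfam_of_rtdva1 by blast

section \<open>A 1DFAM accepting \<open>{0\<^sup>n 1\<^sup>m | m \<le> n}\<close>\<close>

definition zeros_ones_le :: "nat list set" where
  "zeros_ones_le = {w. set w \<subseteq> {0, 1} \<and> (\<exists>n m. w = replicate n 0 @ replicate m 1 \<and> m \<le> n)}"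

lemma replicate_zeros_ones_inject:
  assumes "replicate n 0 @ replicate m 1 = replicate n' (0::nat) @ replicate m' 1"
  shows "n = n' \<and> m = m'"
  using arg_cong[OF assms, of "\<lambda>w. length (filter ((=) 0) w)"]
    arg_cong[OF assms, of "\<lambda>w. length (filter ((=) 1) w)"] by simp

lemma replicate_zeros_ones_in_zeros_ones_le:
  "replicate n 0 @ replicate m 1 \<in> zeros_ones_le \<longleftrightarrow> m \<le> n"
proof
  assume "replicate n 0 @ replicate m 1 \<in> zeros_ones_le"
  then obtain n' m' where "replicate n 0 @ replicate m 1 = replicate n' (0::nat) @ replicate m' 1"
    and "m' \<le> n'" unfolding zeros_ones_le_def by blast
  then show "m \<le> n" using replicate_zeros_ones_inject by blast
qed (auto simp: zeros_ones_le_def)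

lemma replicate_takeWhile_append_dropWhile:
  "replicate (length (takeWhile ((=) c) w)) c @ dropWhile ((=) c) w = w"
proof -
  have "replicate (length (takeWhile ((=) c) w)) c = takeWhile ((=) c) w"
    by (rule replicate_length_same) (auto dest: set_takeWhileD)
  then show ?thesis by simp
qed

lemma binary_word_cases:
  fixes w :: "nat list"
  assumes "set w \<subseteq> {0, 1}"
  obtains (sorted) n m where "w = replicate n 0 @ replicate m 1"
  | (unsorted) n m u where "w = replicate n 0 @ replicate (Suc m) 1 @ 0 # u"
proof -
  define ones where "ones = dropWhile ((=) 0) w"
  define rest where "rest = dropWhile ((=) 1) ones"
  define k where "k = length (takeWhile ((=) 0) w)"
  define l where "l = length (takeWhile ((=) 1) ones)"
  have ones: "ones = replicate l 1 @ rest"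
    using replicate_takeWhile_append_dropWhile[of 1 ones] unfolding l_def rest_def by simp
  have "w = replicate k 0 @ ones"
    using replicate_takeWhile_append_dropWhile[of 0 w] unfolding k_def ones_def by simp
  with ones have w: "w = replicate k 0 @ replicate l 1 @ rest" by simp
  show thesis
  proof (cases rest)
    case Nil
    then show thesis using w sorted by simp
  next
    case (Cons c u)
    have "c \<noteq> 1" using Cons hd_dropWhile[of "(=) 1" ones] by (simp add: rest_def)
    moreover have "c \<in> {0, 1}" using assms w Cons by auto
    ultimately have c: "c = 0" by auto
    have "l \<noteq> 0"
    proof
      assume "l = 0"
      then have "dropWhile ((=) 0) w = 0 # u" using ones Cons c by (simp add: ones_def)
      then show False using hd_dropWhile[of "(=) 0" w] by simp
    qed
    then show thesis using w Cons c unsorted[of k "l - 1" u] by simp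
  qed
qed

text \<open>The register holds \<open>2\<^sup>#\<^sup>0 / 2\<^sup>#\<^sup>1\<close>: state 1 reads zeros, state 2 ones; on the right
  end-marker state 3 halves the register without moving until it equals 1; 4 accepts and 5 is a
  rejecting sink.\<close>

definition halving_delta :: "nat \<Rightarrow> nat tsym \<Rightarrow> bool \<Rightarrow> nat \<times> move \<times> rat" where
  "halving_delta q \<sigma> one =
     (if q = 0 then (1, Right, 1)
      else if q \<in> {1, 2, 3} \<and> \<sigma> = Dollar then (if one then (4, Right, 1) else (3, Stay, 1/2))
      else if q = 1 \<and> \<sigma> = Sym 0 then (1, Right, 2)
      else if q \<in> {1, 2} \<and> \<sigma> = Sym 1 then (2, Right, 1/2)
      else (5, Right, 1))"

definition halving_dfam :: "nat dfam" where
  "halving_dfam = DFAM {0..5} halving_delta 0 {4} {1, 2, 1/2}"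

lemma halving_dfam_wf: "dfam_wf {0, 1} halving_dfam"
  by (auto simp: dfam_wf_def halving_dfam_def halving_delta_def)

lemma dfam_step_halving:
  "i < length t \<Longrightarrow> dfam_step halving_dfam t (q, i, x) =
     (case halving_delta q (t ! i) (x = 1) of
        (q', d, g) \<Rightarrow> (q', if d = Right then Suc i else i, x * g))"
  by (simp add: dfam_step_def halving_dfam_def)

lemma halving_run_zeros:
  "(\<forall>j<n. i + j < length t \<and> t ! (i + j) = Sym 0) \<Longrightarrow>
     (dfam_step halving_dfam t ^^ n) (1, i, x) = (1, i + n, x * 2 ^ n)"
proof (induction n arbitrary: i x)
  case (Suc n)
  then have "i < length t" "t ! i = Sym 0" by auto
  then have "dfam_step halving_dfam t (1, i, x) = (1, Suc i, x * 2)"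
    by (simp add: dfam_step_halving halving_delta_def)
  moreover have "\<forall>j<n. Suc i + j < length t \<and> t ! (Suc i + j) = Sym 0"
    using Suc.prems by (metis add_Suc add_Suc_right Suc_less_eq)
  ultimately show ?case
    unfolding funpow_Suc_right o_apply using Suc.IH[of "Suc i" "x * 2"] by (simp add: mult.assoc)
qed simp

lemma halving_run_ones:
  "q \<in> {1, 2} \<Longrightarrow> (\<forall>j<m. i + j < length t \<and> t ! (i + j) = Sym 1) \<Longrightarrow>
     (dfam_step halving_dfam t ^^ m) (q, i, x) = (if m = 0 then q else 2, i + m, x / 2 ^ m)"
proof (induction m arbitrary: q i x)
  case (Suc m)
  then have "i < length t" "t ! i = Sym 1" by auto
  then have "dfam_step halving_dfam t (q, i, x) = (2, Suc i, x / 2)"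
    using Suc.prems(1) by (auto simp: dfam_step_halving halving_delta_def)
  moreover have "\<forall>j<m. Suc i + j < length t \<and> t ! (Suc i + j) = Sym 1"
    using Suc.prems by (metis add_Suc add_Suc_right Suc_less_eq)
  ultimately show ?case
    unfolding funpow_Suc_right o_apply using Suc.IH[of 2 "Suc i" "x / 2"] by simp
qed simp

lemma two_powi_eq_one_iff: "(2::rat) powi z = 1 \<longleftrightarrow> z = 0"
  using power_int_strict_increasing[of z 0 "2::rat"] power_int_strict_increasing[of 0 z "2::rat"]
  by (cases z "0::int" rule: linorder_cases) auto

lemma halving_run_dollar:
  "q \<in> {1, 2, 3} \<Longrightarrow> p < length t \<Longrightarrow> t ! p = Dollar \<Longrightarrow> (\<forall>j<k. z \<noteq> int j) \<Longrightarrow>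
     (dfam_step halving_dfam t ^^ k) (q, p, 2 powi z) =
       (if k = 0 then q else 3, p, 2 powi (z - int k))"
proof (induction k arbitrary: q z)
  case (Suc k)
  then have "2 powi z \<noteq> (1::rat)" by (auto simp: two_powi_eq_one_iff)
  then have "dfam_step halving_dfam t (q, p, 2 powi z) = (3, p, 2 powi (z - 1))"
    using Suc.prems by (auto simp: dfam_step_halving halving_delta_def power_int_diff)
  moreover have "\<forall>j<k. z - 1 \<noteq> int j" using Suc.prems(4) by force
  ultimately show ?case
    unfolding funpow_Suc_right o_apply using Suc.IH[of 3 "z - 1"] Suc.prems
    by (simp add: algebra_simps)
qed simp

lemma halving_run_rejecting: "fst ((dfam_step halving_dfam t ^^ k) (5, i, x)) = 5"
proof (induction k arbitrary: i x)
  case (Suc k)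
  have "\<exists>i' x'. dfam_step halving_dfam t (5, i, x) = (5, i', x')"
    by (auto simp: dfam_step_def halving_dfam_def halving_delta_def)
  then show ?case using Suc.IH by (metis funpow_Suc_right o_apply)
qed simp

lemma halving_conf_prefix:
  assumes w: "w = replicate n 0 @ replicate m 1 @ u"
  shows "dfam_conf halving_dfam w (1 + n + m) =
    (if m = 0 then 1 else 2, 1 + n + m, 2 powi (int n - int m))"
proof -
  have zeros: "\<forall>j<n. 1 + j < length (tape w) \<and> tape w ! (1 + j) = Sym 0"
    using w by (auto simp: length_tape tape_nth_Suc nth_append)
  have ones: "\<forall>j<m. (1 + n) + j < length (tape w) \<and> tape w ! ((1 + n) + j) = Sym 1"
    using w tape_nth_Suc[of "n + _" w] by (auto simp: length_tape nth_append)
  have "dfam_conf halving_dfam w 1 = (1, 1, 1)"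
    by (simp add: dfam_conf_def dfam_step_def halving_dfam_def halving_delta_def tape_def)
  then have "dfam_conf halving_dfam w (1 + n) = (1, 1 + n, 2 ^ n)"
    using halving_run_zeros[OF zeros] dfam_conf_add[of halving_dfam w 1 n] by simp
  then show ?thesis
    using halving_run_ones[OF _ ones, of 1 "2 ^ n"] dfam_conf_add[of halving_dfam w "1 + n" m]
    by (simp add: power_int_diff)
qed

lemma halving_accepts_sorted:
  "dfam_accepts halving_dfam (replicate n 0 @ replicate m 1) \<longleftrightarrow> m \<le> n"
proof -
  let ?w = "replicate n 0 @ replicate m (1::nat)" and ?p = "1 + n + m"
  let ?q = "if m = 0 then 1 else 2 :: nat"
  have conf: "dfam_conf halving_dfam ?w ?p = (?q, ?p, 2 powi (int n - int m))"
    using halving_conf_prefix[of ?w n m "[]"] by simp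
  have len: "length (tape ?w) = Suc ?p" by (simp add: length_tape)
  have dollar: "tape ?w ! ?p = Dollar" by (simp add: tape_def nth_append)
  have run: "dfam_conf halving_dfam ?w (?p + k) =
      (if k = 0 then ?q else 3, ?p, 2 powi (int n - int m - int k))"
    if "\<forall>j<k. int n - int m \<noteq> int j" for k
    using halving_run_dollar[OF _ _ dollar that] conf len dfam_conf_add[of halving_dfam ?w ?p k]
    by simp
  show ?thesis
  proof
    assume "dfam_accepts halving_dfam ?w"
    then obtain k where "case dfam_conf halving_dfam ?w (?p + k) of (q, i, x) \<Rightarrow>
        i = length (tape ?w) \<and> q \<in> fam_Qa halving_dfam \<and> x = 1"
      unfolding dfam_accepts_after[of _ _ ?p] by (rule exE)
    then show "m \<le> n" using run[of k] len by (cases "m \<le> n") auto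
  next
    assume "m \<le> n"
    then have "\<forall>j<n - m. int n - int m \<noteq> int j" by auto
    with \<open>m \<le> n\<close>
    have "dfam_conf halving_dfam ?w (?p + (n - m)) = (if n - m = 0 then ?q else 3, ?p, 1)"
      using run[of "n - m"] by (simp add: of_nat_diff)
    then have "dfam_conf halving_dfam ?w (?p + (n - m) + 1) = (4, Suc ?p, 1)"
      using dfam_conf_add[of halving_dfam ?w "?p + (n - m)" 1] len dollar
      by (simp add: dfam_step_halving halving_delta_def)
    then show "dfam_accepts halving_dfam ?w"
      unfolding dfam_accepts_def using len
      by (intro exI[of _ "?p + (n - m) + 1"]) (simp add: halving_dfam_def)
  qed
qed

lemma halving_rejects_unsorted:
  "\<not> dfam_accepts halving_dfam (replicate n 0 @ replicate (Suc m) 1 @ 0 # u)"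
proof
  let ?w = "replicate n 0 @ replicate (Suc m) 1 @ 0 # u" and ?p = "1 + n + Suc m"
  assume "dfam_accepts halving_dfam ?w"
  then obtain k where k: "case dfam_conf halving_dfam ?w (Suc ?p + k) of (q, i, x) \<Rightarrow>
      i = length (tape ?w) \<and> q \<in> fam_Qa halving_dfam \<and> x = 1"
    unfolding dfam_accepts_after[of _ _ "Suc ?p"] by (rule exE)
  have "dfam_conf halving_dfam ?w ?p = (2, ?p, 2 powi (int n - int (Suc m)))"
    using halving_conf_prefix[of ?w n "Suc m" "0 # u"] by simp
  moreover have "?p < length (tape ?w)" "tape ?w ! ?p = Sym 0"
    using tape_nth_Suc[of "n + Suc m" ?w] by (simp_all add: length_tape nth_append)
  ultimately have "fst (dfam_conf halving_dfam ?w (Suc ?p)) = 5"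
    using dfam_conf_add[of halving_dfam ?w ?p 1] by (simp add: dfam_step_halving halving_delta_def)
  then have "fst (dfam_conf halving_dfam ?w (Suc ?p + k)) = 5"
    using halving_run_rejecting unfolding dfam_conf_add by (metis prod.collapse)
  then show False using k by (auto simp: halving_dfam_def split: prod.splits)
qed

lemma zeros_ones_le_in_DFAM_langs: "zeros_ones_le \<in> DFAM_langs {0, 1}"
proof -
  have "w \<in> zeros_ones_le \<longleftrightarrow> dfam_accepts halving_dfam w" if "set w \<subseteq> {0, 1}" for w
    using that
  proof (cases rule: binary_word_cases)
    case (sorted n m)
    then show ?thesis
      by (simp only: halving_accepts_sorted replicate_zeros_ones_in_zeros_ones_le)
  next
    case (unsorted n m u)
    have "w \<notin> zeros_ones_le"
      using unsorted by (auto simp: zeros_ones_le_def sorted_append dest!: arg_cong[of _ _ sorted])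
    then show ?thesis using unsorted halving_rejects_unsorted by simp
  qed
  then have "zeros_ones_le = {w. set w \<subseteq> {0, 1} \<and> dfam_accepts halving_dfam w}"
    unfolding zeros_ones_le_def by blast
  then show ?thesis unfolding DFAM_langs_def using halving_dfam_wf by blast
qed

section \<open>No real-time DVA(1) accepts \<open>{0\<^sup>n 1\<^sup>m | m \<le> n}\<close>\<close>

definition rtdva1_run :: "'a rtdva1 \<Rightarrow> 'a list \<Rightarrow> nat \<times> rat \<Rightarrow> nat \<times> rat" where
  "rtdva1_run M u c = foldl (rtdva1_step M) c (map Sym u)"

definition rtdva1_accepting :: "'a rtdva1 \<Rightarrow> nat \<times> rat \<Rightarrow> bool" where
  "rtdva1_accepting M c \<longleftrightarrow>
     fst (rtdva1_step M c Dollar) \<in> dva_Qa M \<and> snd (rtdva1_step M c Dollar) = 1"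

lemma rtdva1_accepts_iff_run:
  "rtdva1_accepts M w \<longleftrightarrow>
     rtdva1_accepting M (rtdva1_run M w (rtdva1_step M (dva_q0 M, dva_v M) Cent))"
  by (simp add: rtdva1_accepts_def rtdva1_final_def tape_def rtdva1_run_def rtdva1_accepting_def)

lemma rtdva1_run_append: "rtdva1_run M (u @ v) c = rtdva1_run M v (rtdva1_run M u c)"
  by (simp add: rtdva1_run_def)

lemma rtdva1_step_eq:
  "rtdva1_step M c \<sigma> =
     (fst (dva_delta M (fst c) \<sigma> (snd c = 1)), snd c * snd (dva_delta M (fst c) \<sigma> (snd c = 1)))"
  by (simp add: rtdva1_step_def split: prod.split)

lemma rtdva1_accepting_value_unique:
  assumes "z \<noteq> 1" "z' \<noteq> 1" "rtdva1_accepting M (q, z)" "rtdva1_accepting M (q, z')"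
  shows "z = z'"
proof -
  let ?d = "snd (dva_delta M q Dollar False)"
  have "z * ?d = 1" "z' * ?d = 1"
    using assms by (simp_all add: rtdva1_accepting_def rtdva1_step_eq)
  then show ?thesis by (metis mult.commute mult_1_right mult.assoc)
qed

lemma rtdva1_run_in_states:
  assumes "rtdva1_wf \<Sigma> M" "set u \<subseteq> \<Sigma>" "fst c \<in> dva_Q M"
  shows "fst (rtdva1_run M u c) \<in> dva_Q M"
  using assms(2,3)
proof (induction u arbitrary: c)
  case (Cons b u)
  have "fst (rtdva1_step M c (Sym b)) \<in> dva_Q M"
    using assms(1) Cons.prems by (simp add: rtdva1_wf_def tape_alph_def rtdva1_step_eq)
  then show ?case using Cons by (simp add: rtdva1_run_def)
qed (simp add: rtdva1_run_def)

text \<open>While its value differs from 1 a DVA(1) cannot see the value, so on a block \<open>a\<^sup>t\<close>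
  it follows the "\<noteq>" transitions; \<open>blind_run\<close> records the state reached and the product
  of the multipliers.\<close>

fun blind_run :: "'a rtdva1 \<Rightarrow> nat \<Rightarrow> 'a \<Rightarrow> nat \<Rightarrow> nat \<times> rat" where
  "blind_run M p a 0 = (p, 1)"
| "blind_run M p a (Suc t) = (case blind_run M p a t of (s, y) \<Rightarrow>
     (fst (dva_delta M s (Sym a) False), y * snd (dva_delta M s (Sym a) False)))"

lemma rtdva1_run_replicate_blind:
  assumes "\<forall>t'<t. x * snd (blind_run M p a t') \<noteq> 1"
  shows "rtdva1_run M (replicate t a) (p, x) =
    (fst (blind_run M p a t), x * snd (blind_run M p a t))"
  using assms
proof (induction t)
  case (Suc t)
  have "rtdva1_run M (replicate (Suc t) a) (p, x) =
      rtdva1_step M (rtdva1_run M (replicate t a) (p, x)) (Sym a)"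
    unfolding replicate_Suc replicate_append_same[symmetric] rtdva1_run_append
    by (simp add: rtdva1_run_def)
  also have "\<dots> = (fst (blind_run M p a (Suc t)), x * snd (blind_run M p a (Suc t)))"
    using Suc by (simp add: rtdva1_step_eq mult.assoc split: prod.split)
  finally show ?case .
qed (simp add: rtdva1_run_def)

lemma blind_run_state_repeats:
  assumes "rtdva1_wf \<Sigma> M" "a \<in> \<Sigma>" "p \<in> dva_Q M"
  obtains T r where "0 < r" "fst (blind_run M p a (T + r)) = fst (blind_run M p a T)"
proof -
  have "fst (blind_run M p a t) \<in> dva_Q M" for t
    using assms by (induction t) (auto simp: rtdva1_wf_def tape_alph_def split: prod.splits)
  then have "finite (range (\<lambda>t. fst (blind_run M p a t)))"
    using assms(1) by (metis finite_subset image_subsetI rtdva1_wf_def)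
  then have "\<not> inj (\<lambda>t. fst (blind_run M p a t))"
    using finite_imageD by blast
  then obtain t t' where "t < t'" "fst (blind_run M p a t) = fst (blind_run M p a t')"
    unfolding inj_def by (metis linorder_neqE_nat)
  then show thesis using that[of "t' - t" t] by simp
qed

lemma blind_run_eventually_periodic_if_thresholds:
  fixes x :: "nat \<Rightarrow> rat"
  assumes wf: "rtdva1_wf \<Sigma> M" and a: "a \<in> \<Sigma>" and p: "p \<in> dva_Q M"
    and I: "infinite I" and x: "inj_on x I"
    and threshold: "\<And>n m. n \<in> I \<Longrightarrow>
      rtdva1_accepting M (rtdva1_run M (replicate m a) (p, x n)) \<longleftrightarrow> m \<le> n"
  obtains T r where "0 < r" "\<And>t. T \<le> t \<Longrightarrow> blind_run M p a (t + r) = blind_run M p a t"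
proof -
  define q where "q t = fst (blind_run M p a t)" for t
  define y where "y t = snd (blind_run M p a t)" for t
  obtain T r where r: "0 < r" and qTr: "q (T + r) = q T"
    using blind_run_state_repeats[OF wf a p] unfolding q_def by blast
  \<comment> \<open>a large \<open>n\<^sub>0\<close> whose value stays away from 1 during the first period\<close>
  obtain n0 where n0: "n0 \<in> I" "T + r \<le> n0" "x n0 \<notin> insert 0 ((\<lambda>t. 1 / y t) ` {..T + r})"
    using infinite_inj_on_avoids_finite[OF I x, of "insert 0 ((\<lambda>t. 1 / y t) ` {..T + r})"]
    by auto
  have n0_blind: "x n0 * y t \<noteq> 1" if "t \<le> T + r" for t
  proof
    assume "x n0 * y t = 1"
    then have "x n0 = 1 / y t" by (cases "y t = 0") (simp_all add: field_simps)
    then show False using n0(3) that by auto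
  qed
  have accepts: "rtdva1_accepting M (q t, x n0 * y t)" if "t \<le> T + r" for t
    using threshold[OF n0(1), of t] rtdva1_run_replicate_blind[of t "x n0" M p a]
      n0_blind that n0(2)
    unfolding q_def y_def by simp
  have "x n0 * y (T + r) = x n0 * y T"
    by (rule rtdva1_accepting_value_unique[of _ _ M "q T"])
      (use accepts[of "T + r"] accepts[of T] n0_blind qTr in auto)
  then have "y (T + r) = y T" using n0(3) by simp
  then have "blind_run M p a (t + r) = blind_run M p a t" if "T \<le> t" for t
    using qTr unfolding q_def y_def
    by (intro recurrence_periodic[OF _ _ that]) (simp_all add: prod_eq_iff split: prod.split)
  with r show thesis using that by blast
qed

lemma rtdva1_no_unbounded_thresholds:
  fixes x :: "nat \<Rightarrow> rat"
  assumes wf: "rtdva1_wf \<Sigma> M" and a: "a \<in> \<Sigma>" and p: "p \<in> dva_Q M"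
    and I: "infinite I" and x: "inj_on x I"
    and threshold: "\<And>n m. n \<in> I \<Longrightarrow>
      rtdva1_accepting M (rtdva1_run M (replicate m a) (p, x n)) \<longleftrightarrow> m \<le> n"
  shows False
proof -
  obtain T r where r: "0 < r"
    and periodic: "\<And>t. T \<le> t \<Longrightarrow> blind_run M p a (t + r) = blind_run M p a t"
    using blind_run_eventually_periodic_if_thresholds[OF assms] by blast
  define q where "q t = fst (blind_run M p a t)" for t
  define y where "y t = snd (blind_run M p a t)" for t
  have "finite (range y)"
    using eventually_periodic_finite_range[of r T y] r periodic unfolding y_def by simp
  then obtain n where n: "n \<in> I" "T + r \<le> n" "x n \<notin> (\<lambda>z. 1 / z) ` range y"
    using infinite_inj_on_avoids_finite[OF I x, of "(\<lambda>z. 1 / z) ` range y"] by auto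
  have "\<exists>h. x n * y h = 1"
  proof (rule ccontr)
    assume "\<nexists>h. x n * y h = 1"
    then have "rtdva1_accepting M (q m, x n * y m) \<longleftrightarrow> m \<le> n" for m
      using threshold[OF n(1), of m] rtdva1_run_replicate_blind[of m "x n" M p a]
      unfolding q_def y_def by simp
    \<comment> \<open>so \<open>1\<^sup>n\<^sup>+\<^sup>1\<^sup>-\<^sup>r\<close> and \<open>1\<^sup>n\<^sup>+\<^sup>1\<close> would lead to the same configuration\<close>
    from this[of "n + 1 - r"] this[of "n + 1"] show False
      using periodic[of "n + 1 - r"] n(2) r unfolding q_def y_def by simp
  qed
  then obtain h where "x n * y h = 1" by blast
  then have "x n = 1 / y h" by (cases "y h = 0") (simp_all add: field_simps)
  with n show False by auto
qed

lemma zeros_ones_le_notin_rtDVA1_langs: "zeros_ones_le \<notin> rtDVA1_langs {0, 1}"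
proof
  assume "zeros_ones_le \<in> rtDVA1_langs {0, 1}"
  then obtain M where wf: "rtdva1_wf {0, 1} M"
    and L: "zeros_ones_le = {w. set w \<subseteq> {0, 1} \<and> rtdva1_accepts M w}"
    unfolding rtDVA1_langs_def by blast
  define c where
    "c n = rtdva1_run M (replicate n 0) (rtdva1_step M (dva_q0 M, dva_v M) Cent)" for n
  have threshold: "rtdva1_accepting M (rtdva1_run M (replicate m 1) (c n)) \<longleftrightarrow> m \<le> n" for n m
  proof -
    have "set (replicate n 0 @ replicate m (1::nat)) \<subseteq> {0, 1}" by auto
    then have "m \<le> n \<longleftrightarrow> rtdva1_accepts M (replicate n 0 @ replicate m 1)"
      using replicate_zeros_ones_in_zeros_ones_le[of n m] L by blast
    then show ?thesis by (simp add: rtdva1_accepts_iff_run rtdva1_run_append c_def)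
  qed
  have "inj c"
  proof (rule injI)
    fix n n' assume "c n = c n'"
    then have "n \<le> n' \<and> n' \<le> n"
      using threshold[of n n] threshold[of n' n'] threshold[of n n'] threshold[of n' n] by simp
    then show "n = n'" by simp
  qed
  have "fst (c n) \<in> dva_Q M" for n
  proof -
    have "fst (rtdva1_step M (dva_q0 M, dva_v M) Cent) \<in> dva_Q M"
      using wf by (simp add: rtdva1_wf_def tape_alph_def rtdva1_step_eq)
    then show ?thesis unfolding c_def by (intro rtdva1_run_in_states[OF wf]) auto
  qed
  then have "finite (range (fst \<circ> c))"
    using wf unfolding rtdva1_wf_def by (auto intro: finite_subset[of _ "dva_Q M"])
  then obtain p where p: "p \<in> range (fst \<circ> c)" and I: "infinite ((fst \<circ> c) -` {p})"
    by (rule inf_img_fin_domE) simp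
  define I where "I = (fst \<circ> c) -` {p}"
  have c_I: "c n = (p, snd (c n))" if "n \<in> I" for n
    using that unfolding I_def by (simp add: prod_eq_iff)
  show False
  proof (rule rtdva1_no_unbounded_thresholds[OF wf _ _ I[folded I_def]])
    show "inj_on (snd \<circ> c) I"
    proof (rule inj_onI)
      fix n n' assume "n \<in> I" "n' \<in> I" "(snd \<circ> c) n = (snd \<circ> c) n'"
      then have "c n = c n'" using c_I[of n] c_I[of n'] by simp
      with \<open>inj c\<close> show "n = n'" by (rule injD)
    qed
    show "p \<in> dva_Q M" using p \<open>\<And>n. fst (c n) \<in> dva_Q M\<close> by auto
    show "rtdva1_accepting M (rtdva1_run M (replicate m 1) (p, (snd \<circ> c) n)) \<longleftrightarrow> m \<le> n"
      if "n \<in> I" for n m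
      using threshold[of m n] c_I[OF that] by simp
  qed simp
qed

theorem theorem7:
  shows "(\<forall>\<Sigma> :: 'a set. finite \<Sigma> \<longrightarrow> rtDVA1_langs \<Sigma> \<subseteq> DFAM_langs \<Sigma>) \<and>
         (\<exists>(\<Sigma> :: nat set) L. finite \<Sigma> \<and> L \<in> DFAM_langs \<Sigma> \<and> L \<notin> rtDVA1_langs \<Sigma>)"
proof (intro conjI allI impI)
  fix \<Sigma> :: "'a set"
  assume "finite \<Sigma>"
  then show "rtDVA1_langs \<Sigma> \<subseteq> DFAM_langs \<Sigma>" by (rule rtDVA1_langs_subset_DFAM_langs)
next
  show "\<exists>(\<Sigma> :: nat set) L. finite \<Sigma> \<and> L \<in> DFAM_langs \<Sigma> \<and> L \<notin> rtDVA1_langs \<Sigma>"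
    using zeros_ones_le_in_DFAM_langs zeros_ones_le_notin_rtDVA1_langs
    by (intro exI[of _ "{0, 1}"] exI[of _ zeros_ones_le]) simp
qed

end
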